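(* Under the standing setup, let $\pi$ be any policy, $(\Gamma_n)_n$ the RDBP controlled by $\pi$ and $(W_n)_n$ the wf-process, both defined on the same double arrays with $\Gamma_0=W_0=1$. Then $\Gamma_n\le W_n$ almost surely for every $n\ge0$. In particular $q_W\le q_\Gamma$.
   Context: Standing setup. On a probability space $(\Omega,\mathcal F,\mathrm P)$ there are three mutually independent double arrays $(D_n^k)_{n\ge0,k\ge1}$, $(X_n^k)_{n\ge0,k\ge1}$, $(R_n^k)_{n\ge0,k\ge1}$, each consisting of i.i.d. random variables: $D_n^k\in\{0,1,2,\dots\}$ with law $p_j=\mathrm P[D_n^k=j]$ and mean $m$; $X_n^k\ge0$ real-valued with continuous distribution function $F$ and mean $\mu$; $R_n^k\ge0$ real-valued with mean $r$. Standing assumptions: (A1) $1<m<\infty$, $r<\infty$, $0<\mu<\infty$; (A2) $p_0>0$ and $p_k>0$ for some $k\ge2$; (A3) for the process under consideration started at $1$, every finite positive state is reached with positive probability; (A4) $D_n^k,X_n^k,R_n^k$ have finite variances. Write $D_n(k)=\sum_{j=1}^kD_n^j$, $R_n(k)=\sum_{j=1}^kR_n^j$. A policy is a sequence $\pi=(\pi_t)_{t\ge1}$ where $\pi_t$ assigns to each $(x_k)_{k=1}^t\in[0,\infty)^t$ a permutation $\sigma=\pi_t((x_k)_{k=1}^t)$ of $\{1,\dots,t\}$. Its counting function is $Q^\pi(0,\varnothing,s)=0$ and, for $t\ge1$, $Q^\pi(t,(x_k)_{k=1}^t,s)=0$ if $x_{\sigma(1)}>s$, otherwise $\max\{1\le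 k\le t:\sum_{j=1}^kx_{\sigma(j)}\le s\}$. The RDBP controlled by $\pi$ started at $L$ is $\Gamma_0=L$, $\Gamma_{n+1}=Q^\pi\big(D_n(\Gamma_n),(X_n^k)_{k=1}^{D_n(\Gamma_n)},R_n(\Gamma_n)\big)$. The weakest-first policy takes $\sigma$ with $x_{\sigma(1)}\le\dots\le x_{\sigma(t)}$; its counting function is denoted $N$ and the corresponding RDBP, the wf-process, is denoted $(W_n)_n$. For a process $(Z_n)$, $q_Z=\mathrm P[\lim_nZ_n=0\mid Z_0=1]$ is its extinction probability. *)

theory Defs
  imports "HOL-Probability.Probability" "HOL-Combinatorics.Permutations"
begin

definition policy :: "(nat \<Rightarrow> (nat \<Rightarrow> real) \<Rightarrow> nat \<Rightarrow> nat) \<Rightarrow> bool" where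
  "policy pol \<longleftrightarrow>
     (\<forall>t\<ge>1. \<forall>x. (\<forall>k\<in>{1..t}. 0 \<le> x k) \<longrightarrow> pol t x permutes {1..t})"

text \<open>Measurability of the policy (needed so that the controlled process is a random variable).\<close>
definition measurable_policy :: "(nat \<Rightarrow> (nat \<Rightarrow> real) \<Rightarrow> nat \<Rightarrow> nat) \<Rightarrow> bool" where
  "measurable_policy pol \<longleftrightarrow>
     (\<forall>t j. (\<lambda>x. pol t x j) \<in> measurable (Pi\<^sub>M UNIV (\<lambda>_. borel)) (count_space UNIV))"

definition wf_policy :: "(nat \<Rightarrow> (nat \<Rightarrow> real) \<Rightarrow> nat \<Rightarrow> nat) \<Rightarrow> bool" where
  "wf_policy pol \<longleftrightarrow> policy pol \<and>
     (\<forall>t\<ge>1. \<forall>x. (\<forall>k\<in>{1..t}. 0 \<le> x k) \<longrightarrow>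
        (\<forall>i j. 1 \<le> i \<and> i \<le> j \<and> j \<le> t \<longrightarrow> x (pol t x i) \<le> x (pol t x j)))"

definition countfun :: "(nat \<Rightarrow> (nat \<Rightarrow> real) \<Rightarrow> nat \<Rightarrow> nat) \<Rightarrow> nat \<Rightarrow> (nat \<Rightarrow> real) \<Rightarrow> real \<Rightarrow> nat" where
  "countfun pol t x s =
     (if t = 0 then 0
      else if x (pol t x 1) > s then 0
      else Max {k \<in> {1..t}. (\<Sum>j=1..k. x (pol t x j)) \<le> s})"

text \<open>The RDBP controlled by pol started at L, built on the arrays D, X, R
  (array entries are indexed by n \<ge> 0 and k \<ge> 1; entries with k = 0 are unused).\<close>
primrec rdbp :: "(nat \<Rightarrow> (nat \<Rightarrow> real) \<Rightarrow> nat \<Rightarrow> nat) \<Rightarrow> (nat \<Rightarrow> nat \<Rightarrow> 'a \<Rightarrow> nat) \<Rightarrow>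
    (nat \<Rightarrow> nat \<Rightarrow> 'a \<Rightarrow> real) \<Rightarrow> (nat \<Rightarrow> nat \<Rightarrow> 'a \<Rightarrow> real) \<Rightarrow> nat \<Rightarrow> nat \<Rightarrow> 'a \<Rightarrow> nat" where
  "rdbp pol D X R L 0 \<omega> = L"
| "rdbp pol D X R L (Suc n) \<omega> =
     (let g = rdbp pol D X R L n \<omega>;
          t = (\<Sum>k=1..g. D n k \<omega>)
      in countfun pol t (\<lambda>k. if k \<in> {1..t} then X n k \<omega> else 0) (\<Sum>k=1..g. R n k \<omega>))"

datatype arr = ArrD | ArrX | ArrR

definition all_entries :: "(nat \<Rightarrow> nat \<Rightarrow> 'a \<Rightarrow> nat) \<Rightarrow> (nat \<Rightarrow> nat \<Rightarrow> 'a \<Rightarrow> real) \<Rightarrow>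
    (nat \<Rightarrow> nat \<Rightarrow> 'a \<Rightarrow> real) \<Rightarrow> arr \<times> nat \<times> nat \<Rightarrow> 'a \<Rightarrow> real" where
  "all_entries D X R = (\<lambda>(a, n, k) \<omega>. case a of ArrD \<Rightarrow> real (D n k \<omega>) | ArrX \<Rightarrow> X n k \<omega> | ArrR \<Rightarrow> R n k \<omega>)"

definition ext_prob :: "'a measure \<Rightarrow> (nat \<Rightarrow> 'a \<Rightarrow> nat) \<Rightarrow> real" where
  "ext_prob M Z = measure M {\<omega> \<in> space M. (\<lambda>n. real (Z n \<omega>)) \<longlonglongrightarrow> 0}"

end

theory Submission
  imports Defs
begin

text \<open>
  Every policy is dominated pathwise by the weakest-first policy.  The argument is
  purely combinatorial and holds for every sample point:

  \<^item> If the numbers x(p 1) \<le> ... \<le> x(p n) are listed in increasing order, the sum of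
    the first k of them is at most the sum of any k distinct entries
    (sorted_prefix_sum_le, sorted_prefix_le_injective).
  \<^item> Hence the weakest-first counting function, given at least as many candidates
    and at least as large a resource, selects at least as many individuals as any
    other policy (countfun_wf_dominates).
  \<^item> Induction over the generations gives \<Gamma>_n \<le> W_n at every sample point
    (rdbp_wf_dominates), so extinction of W forces extinction of \<Gamma>.
  \<^item> Measurability of the controlled process (rdbp_measurable) makes the extinction
    event of \<Gamma> measurable, so q_W \<le> q_\<Gamma> follows by monotonicity of the measure
    (ext_prob_antimono).
  Only nonnegativity, measurability and the policy conditions enter.
\<close>

lemma sorted_prefix_sum_le:
  fixes y :: "nat \<Rightarrow> real"
  assumes mono: "\<And>i j. 1 \<le> i \<Longrightarrow> i \<le> j \<Longrightarrow> j \<le> n \<Longrightarrow> y i \<le> y j"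
    and S: "S \<subseteq> {1..n}" "card S = k"
  shows "(\<Sum>j=1..k. y j) \<le> sum y S"
proof (cases "k = 0")
  case True
  then show ?thesis using S by (simp add: card_eq_0_iff finite_subset)
next
  case False
  have finS: "finite S" using S(1) finite_subset by blast
  have kn: "k \<le> n" using card_mono[OF _ S(1)] S(2) by simp
  let ?K = "{1..k}"
  text \<open>Compare the parts outside the common intersection: they have the same size,
    entries of ?K - S are at most y k, entries of S - ?K are at least y k.\<close>
  have split_S: "sum y S = sum y (S \<inter> ?K) + sum y (S - ?K)" by (rule sum.Int_Diff[OF finS])
  have split_K: "sum y ?K = sum y (?K \<inter> S) + sum y (?K - S)" by (rule sum.Int_Diff) simp
  have "card S = card (S \<inter> ?K) + card (S - ?K)" "card ?K = card (?K \<inter> S) + card (?K - S)"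
    using card_Int_Diff[OF finS] card_Int_Diff[of ?K S] by auto
  then have same_card: "card (S - ?K) = card (?K - S)" using S(2) by (simp add: Int_commute)
  have "sum y (?K - S) \<le> of_nat (card (?K - S)) * y k"
    by (rule sum_bounded_above) (use kn mono in auto)
  moreover have "of_nat (card (S - ?K)) * y k \<le> sum y (S - ?K)"
    by (rule sum_bounded_below) (use S(1) False mono in auto)
  ultimately show ?thesis using split_S split_K same_card by (simp add: Int_commute)
qed

lemma sorted_prefix_le_injective:
  fixes x :: "nat \<Rightarrow> real"
  assumes p: "p permutes {1..n}"
    and mono: "\<And>i j. 1 \<le> i \<Longrightarrow> i \<le> j \<Longrightarrow> j \<le> n \<Longrightarrow> x (p i) \<le> x (p j)"
    and inj: "inj_on f {1..k}" and rng: "f ` {1..k} \<subseteq> {1..n}"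
  shows "(\<Sum>j=1..k. x (p j)) \<le> (\<Sum>j=1..k. x (f j))"
proof -
  define q where "q = inv p"
  have q: "q permutes {1..n}" unfolding q_def by (rule permutes_inv[OF p])
  have inj_qf: "inj_on (q \<circ> f) {1..k}"
    using inj permutes_inj[OF q] by (simp add: comp_inj_on inj_on_subset)
  have range_qf: "(q \<circ> f) ` {1..k} \<subseteq> {1..n}"
    using rng permutes_image[OF q] by (auto simp: image_comp[symmetric])
  have card_qf: "card ((q \<circ> f) ` {1..k}) = k" using card_image[OF inj_qf] by simp
  have "(\<Sum>j=1..k. x (p j)) \<le> sum (\<lambda>i. x (p i)) ((q \<circ> f) ` {1..k})"
    by (rule sorted_prefix_sum_le[OF _ range_qf card_qf]) (rule mono)
  also have "\<dots> = (\<Sum>j=1..k. x (p (q (f j))))"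
    by (subst sum.reindex[OF inj_qf]) simp
  also have "\<dots> = (\<Sum>j=1..k. x (f j))"
    unfolding q_def using permutes_inverses(1)[OF p] by simp
  finally show ?thesis .
qed

lemma countfun_pos:
  assumes "countfun pol t x s \<noteq> 0"
  shows "countfun pol t x s \<in> {1..t}"
    and "(\<Sum>j=1..countfun pol t x s. x (pol t x j)) \<le> s"
proof -
  let ?S = "{k \<in> {1..t}. (\<Sum>j=1..k. x (pol t x j)) \<le> s}"
  have nondeg: "t \<noteq> 0" "\<not> x (pol t x 1) > s"
    using assms by (auto simp: countfun_def split: if_splits)
  then have "1 \<in> ?S" by auto
  then have "Max ?S \<in> ?S" by (intro Max_in) auto
  moreover have "countfun pol t x s = Max ?S" using nondeg by (simp add: countfun_def)
  ultimately show "countfun pol t x s \<in> {1..t}"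
    and "(\<Sum>j=1..countfun pol t x s. x (pol t x j)) \<le> s" by auto
qed

text \<open>Conversely, the count is at least every feasible prefix length (for
  nonnegative entries, so that a feasible prefix makes its first entry feasible).\<close>
lemma countfun_ge:
  assumes k: "k \<in> {1..t}" and fits: "(\<Sum>j=1..k. x (pol t x j)) \<le> s"
    and nonneg: "\<And>j. j \<in> {1..k} \<Longrightarrow> 0 \<le> x (pol t x j)"
  shows "k \<le> countfun pol t x s"
proof -
  have "x (pol t x 1) \<le> (\<Sum>j=1..k. x (pol t x j))"
    by (rule member_le_sum) (use k nonneg in auto)
  then have "\<not> x (pol t x 1) > s" using fits by linarith
  then have "countfun pol t x s = Max {k \<in> {1..t}. (\<Sum>j=1..k. x (pol t x j)) \<le> s}"
    using k by (simp add: countfun_def)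
  then show ?thesis using k fits by (simp add: Max_ge)
qed

lemma countfun_wf_dominates:
  assumes pol: "policy pol" and wf: "wf_policy pw" and tt: "t \<le> t'"
    and agree: "\<And>k. k \<in> {1..t} \<Longrightarrow> x k = x' k"
    and nonneg: "\<And>k. k \<in> {1..t'} \<Longrightarrow> 0 \<le> x' k" and ss: "s \<le> s'"
  shows "countfun pol t x s \<le> countfun pw t' x' s'"
proof (cases "countfun pol t x s = 0")
  case False
  define K where "K = countfun pol t x s"
  have K: "K \<in> {1..t}" "(\<Sum>j=1..K. x (pol t x j)) \<le> s"
    using countfun_pos[OF False] unfolding K_def by auto
  have "\<forall>k\<in>{1..t}. 0 \<le> x k" using agree nonneg tt by fastforce
  then have sigma: "pol t x permutes {1..t}" using pol K(1) unfolding policy_def by auto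
  have t': "t' \<ge> 1" using K(1) tt by auto
  have sorted: "pw t' x' permutes {1..t'}"
    "\<And>i j. 1 \<le> i \<Longrightarrow> i \<le> j \<Longrightarrow> j \<le> t' \<Longrightarrow> x' (pw t' x' i) \<le> x' (pw t' x' j)"
    using wf t' nonneg unfolding wf_policy_def policy_def by auto
  have sigma_K: "pol t x j \<in> {1..t}" if "j \<in> {1..K}" for j
    using that K(1) permutes_in_image[OF sigma] by auto
  have "(\<Sum>j=1..K. x' (pw t' x' j)) \<le> (\<Sum>j=1..K. x' (pol t x j))"
  proof (rule sorted_prefix_le_injective[where x = x' and p = "pw t' x'", OF sorted])
    show "inj_on (pol t x) {1..K}" using permutes_inj[OF sigma] inj_on_subset by blast
    show "pol t x ` {1..K} \<subseteq> {1..t'}" using sigma_K tt by fastforce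
  qed
  also have "\<dots> = (\<Sum>j=1..K. x (pol t x j))"
    using sigma_K agree by (intro sum.cong) auto
  finally have "(\<Sum>j=1..K. x' (pw t' x' j)) \<le> s'" using K(2) ss by linarith
  moreover have "0 \<le> x' (pw t' x' j)" if "j \<in> {1..K}" for j
    using that K(1) tt nonneg permutes_in_image[OF sorted(1)] by auto
  ultimately have "K \<le> countfun pw t' x' s'"
    using K(1) tt by (intro countfun_ge) auto
  then show ?thesis unfolding K_def .
qed simp

lemma countfun_measurable:
  assumes pol: "measurable_policy pol"
    and xv: "xv \<in> M \<rightarrow>\<^sub>M Pi\<^sub>M UNIV (\<lambda>_. borel)" and s[measurable]: "s \<in> borel_measurable M"
  shows "(\<lambda>\<omega>. countfun pol t (xv \<omega>) (s \<omega>)) \<in> M \<rightarrow>\<^sub>M count_space UNIV"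
proof -
  have [measurable]: "(\<lambda>\<omega>. xv \<omega> i) \<in> borel_measurable M" for i
    using measurable_compose[OF xv measurable_component_singleton[of i UNIV]] by simp
  have "(\<lambda>\<omega>. pol t (xv \<omega>) j) \<in> M \<rightarrow>\<^sub>M count_space UNIV" for j
    using measurable_compose[OF xv] pol unfolding measurable_policy_def by blast
  then have [measurable]: "(\<lambda>\<omega>. xv \<omega> (pol t (xv \<omega>) j)) \<in> borel_measurable M" for j
    by (rule measurable_compose_countable[where f = "\<lambda>i \<omega>. xv \<omega> i", rotated]) measurable
  show ?thesis
    unfolding countfun_def by measurable
qed

lemma rdbp_wf_dominates:
  assumes pol: "policy pol" and wf: "wf_policy pw"
    and X_nonneg: "\<And>n k. 0 \<le> X n k \<omega>" and R_nonneg: "\<And>n k. 0 \<le> R n k \<omega>"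
  shows "rdbp pol D X R L n \<omega> \<le> rdbp pw D X R L n \<omega>"
proof (induction n)
  case (Suc n)
  let ?g = "rdbp pol D X R L n \<omega>" and ?w = "rdbp pw D X R L n \<omega>"
  define t where "t = (\<Sum>k=1..?g. D n k \<omega>)"
  define t' where "t' = (\<Sum>k=1..?w. D n k \<omega>)"
  have "t \<le> t'" unfolding t_def t'_def using Suc.IH by (intro sum_mono2) auto
  moreover have "(\<Sum>k=1..?g. R n k \<omega>) \<le> (\<Sum>k=1..?w. R n k \<omega>)"
    using Suc.IH R_nonneg by (intro sum_mono2) auto
  ultimately have "countfun pol t (\<lambda>k. if k \<in> {1..t} then X n k \<omega> else 0) (\<Sum>k=1..?g. R n k \<omega>)
      \<le> countfun pw t' (\<lambda>k. if k \<in> {1..t'} then X n k \<omega> else 0) (\<Sum>k=1..?w. R n k \<omega>)"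
    by (intro countfun_wf_dominates[OF pol wf]) (auto simp: X_nonneg)
  then show ?case by (simp add: Let_def t_def t'_def)
qed simp

lemma rdbp_measurable:
  assumes pol: "measurable_policy pol"
    and D: "\<And>n k. D n k \<in> M \<rightarrow>\<^sub>M count_space UNIV"
    and X: "\<And>n k. X n k \<in> borel_measurable M" and R: "\<And>n k. R n k \<in> borel_measurable M"
  shows "rdbp pol D X R L n \<in> M \<rightarrow>\<^sub>M count_space UNIV"
proof (induction n)
  case (Suc n)
  text \<open>For fixed population size g and candidate number t the next generation is
    measurable; substituting the random values of t and g preserves this, as both
    range over a countable set.\<close>
  have fixed_t: "(\<lambda>\<omega>. countfun pol t (\<lambda>k. if k \<in> {1..t} then X n k \<omega> else 0) (\<Sum>k=1..g. R n k \<omega>))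
      \<in> M \<rightarrow>\<^sub>M count_space UNIV" for g t
    by (rule countfun_measurable[OF pol])
       (auto intro!: measurable_PiM_single' borel_measurable_sum measurable_If X R)
  have "(\<lambda>\<omega>. countfun pol (\<Sum>k=1..g. D n k \<omega>)
      (\<lambda>k. if k \<in> {1..\<Sum>k=1..g. D n k \<omega>} then X n k \<omega> else 0) (\<Sum>k=1..g. R n k \<omega>))
      \<in> M \<rightarrow>\<^sub>M count_space UNIV" for g
    by (rule measurable_compose_countable[OF fixed_t]) (use D in measurable)
  from measurable_compose_countable[OF this Suc.IH] show ?case
    by (simp add: Let_def)
qed simp

lemma ext_prob_antimono:
  assumes M: "finite_measure M"
    and Z: "\<And>n. Z n \<in> M \<rightarrow>\<^sub>M count_space UNIV"
    and le: "\<And>n \<omega>. \<omega> \<in> space M \<Longrightarrow> Z n \<omega> \<le> Z' n \<omega>"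
  shows "ext_prob M Z' \<le> ext_prob M Z"
proof -
  have real_Z: "(\<lambda>\<omega>. real (Z n \<omega>)) \<in> borel_measurable M" for n
    by (rule measurable_compose_countable[OF _ Z]) simp
  have "Measurable.pred M (\<lambda>\<omega>. (\<lambda>n. real (Z n \<omega>)) \<longlonglongrightarrow> 0)"
    by (rule measurable_limit2[OF real_Z]) simp
  then have "{\<omega> \<in> space M. (\<lambda>n. real (Z n \<omega>)) \<longlonglongrightarrow> 0} \<in> sets M"
    by simp
  moreover have "{\<omega> \<in> space M. (\<lambda>n. real (Z' n \<omega>)) \<longlonglongrightarrow> 0}
      \<subseteq> {\<omega> \<in> space M. (\<lambda>n. real (Z n \<omega>)) \<longlonglongrightarrow> 0}"
  proof (rule subsetI)
    fix \<omega> assume "\<omega> \<in> {\<omega> \<in> space M. (\<lambda>n. real (Z' n \<omega>)) \<longlonglongrightarrow> 0}"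
    then have \<omega>: "\<omega> \<in> space M" and lim: "(\<lambda>n. real (Z' n \<omega>)) \<longlonglongrightarrow> 0" by auto
    have "(\<lambda>n. real (Z n \<omega>)) \<longlonglongrightarrow> 0"
      by (rule real_tendsto_sandwich[OF _ _ tendsto_const lim]) (simp_all add: le[OF \<omega>])
    with \<omega> show "\<omega> \<in> {\<omega> \<in> space M. (\<lambda>n. real (Z n \<omega>)) \<longlonglongrightarrow> 0}" by simp
  qed
  ultimately show ?thesis
    unfolding ext_prob_def by (intro finite_measure.finite_measure_mono[OF M])
qed

theorem mainTheorem4:
  fixes M :: "'a measure"
    and D :: "nat \<Rightarrow> nat \<Rightarrow> 'a \<Rightarrow> nat"
    and X R :: "nat \<Rightarrow> nat \<Rightarrow> 'a \<Rightarrow> real"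
    and pol pw :: "nat \<Rightarrow> (nat \<Rightarrow> real) \<Rightarrow> nat \<Rightarrow> nat"
  assumes P: "prob_space M"
    and D_meas: "\<And>n k. D n k \<in> measurable M (count_space UNIV)"
    and X_meas: "\<And>n k. X n k \<in> borel_measurable M"
    and R_meas: "\<And>n k. R n k \<in> borel_measurable M"
    and indep: "prob_space.indep_vars M (\<lambda>_. borel) (all_entries D X R)
                  {(a, n, k). k \<ge> 1}"
    and D_ident: "\<And>n k. k \<ge> 1 \<Longrightarrow>
                  distr M (count_space UNIV) (D n k) = distr M (count_space UNIV) (D 0 1)"
    and X_ident: "\<And>n k. k \<ge> 1 \<Longrightarrow> distr M borel (X n k) = distr M borel (X 0 1)"
    and R_ident: "\<And>n k. k \<ge> 1 \<Longrightarrow> distr M borel (R n k) = distr M borel (R 0 1)"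
    and X_nonneg: "\<And>n k \<omega>. \<omega> \<in> space M \<Longrightarrow> 0 \<le> X n k \<omega>"
    and R_nonneg: "\<And>n k \<omega>. \<omega> \<in> space M \<Longrightarrow> 0 \<le> R n k \<omega>"
    and F_cont: "\<And>x. isCont (cdf (distr M borel (X 0 1))) x"
    and A1_m: "integrable M (\<lambda>\<omega>. real (D 0 1 \<omega>))" "1 < (\<integral>\<omega>. real (D 0 1 \<omega>) \<partial>M)"
    and A1_r: "integrable M (R 0 1)"
    and A1_mu: "integrable M (X 0 1)" "0 < (\<integral>\<omega>. X 0 1 \<omega> \<partial>M)"
    and A2: "0 < measure M {\<omega> \<in> space M. D 0 1 \<omega> = 0}"
            "\<exists>j\<ge>2. 0 < measure M {\<omega> \<in> space M. D 0 1 \<omega> = j}"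
    and A3: "\<And>j. j \<ge> 1 \<Longrightarrow> \<exists>n. 0 < measure M {\<omega> \<in> space M. rdbp pw D X R 1 n \<omega> = j}"
    and A4: "integrable M (\<lambda>\<omega>. (real (D 0 1 \<omega>))\<^sup>2)"
            "integrable M (\<lambda>\<omega>. (X 0 1 \<omega>)\<^sup>2)"
            "integrable M (\<lambda>\<omega>. (R 0 1 \<omega>)\<^sup>2)"
    and pi_pol: "policy pol" "measurable_policy pol"
    and pw_pol: "wf_policy pw" "measurable_policy pw"
  shows "(\<forall>n. AE \<omega> in M. rdbp pol D X R 1 n \<omega> \<le> rdbp pw D X R 1 n \<omega>)
         \<and> ext_prob M (rdbp pw D X R 1) \<le> ext_prob M (rdbp pol D X R 1)"
proof -
  interpret prob_space M by (rule P)
  have dominated: "rdbp pol D X R 1 n \<omega> \<le> rdbp pw D X R 1 n \<omega>" if "\<omega> \<in> space M" for n \<omega>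
    by (rule rdbp_wf_dominates[OF pi_pol(1) pw_pol(1)]) (use X_nonneg R_nonneg that in auto)
  have "rdbp pol D X R 1 n \<in> M \<rightarrow>\<^sub>M count_space UNIV" for n
    by (rule rdbp_measurable[OF pi_pol(2) D_meas X_meas R_meas])
  then have "ext_prob M (rdbp pw D X R 1) \<le> ext_prob M (rdbp pol D X R 1)"
    using dominated by (intro ext_prob_antimono) unfold_locales
  then show ?thesis
    using dominated by auto
qed

end
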